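(* For every type $\lambda$ of degree $d$, $$H_\lambda=\sum_{\tau}a(\tau,\lambda)\,M_\tau,\qquad E^+_\lambda=\sum_\tau e(\tau,\lambda)\,M_\tau,$$ the sums over all types $\tau$ of degree $d$, where $a(\tau,\lambda)$ is the number of arrangements of $\tau$ into $\lambda$ and $e(\tau,\lambda)$ the number of such arrangements with all entries in $\{0,1\}$. Moreover $a(\tau,\lambda)=a(\lambda^t,\tau^t)$ and $e(\tau,\lambda)=e(\lambda^t,\tau^t)$, the equalities being realized by the bijection $A\mapsto A^T$ on arrangements.
   Context: Let $x_{ij}$ ($i,j\ge1$) be indeterminates with $x_{ij}$ of degree $i$. The ring $\mathrm{PS}_{\mathbb Z}$ of polysymmetric functions is the ring of formal sums of monomials in the $x_{ij}$ of bounded degree with integer coefficients that are invariant under all permutations of the index set $\mathbb N_{>0}^2$ preserving the first coordinate. A type of degree $d$ is a finite multiset of pairs $(b,m)$ of positive integers with $\sum bm=d$; its transpose $\tau^t$ replaces each $(b,m)$ by $(m,b)$. A monomial $x_{i_1j_1}^{m_1}\cdots x_{i_rj_r}^{m_r}$ with distinct variables and $m_k\ge1$ has type $\{(i_1,m_1),\dots,(i_r,m_r)\}$; $M_\tau$ is the sum of all monomials of type $\tau$. $H_d$ is the sum of all monomials of degree $d$ and $E^+_d$ the sum of all squarefree monomials of degree $d$; for a type $\lambda$, $H_\lambda=\prod_{(d,m)\in\lambda}H_d(x_{**}^m)$ and $E^+_\lambda=\prod_{(d,m)\in\lambda}E^+_d(x_{**}^m)$, where $f(x_{**}^m)$ means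 substituting $x_{ij}\mapsto x_{ij}^m$. For types $\tau=\{(b_1,m_1),\dots,(b_r,m_r)\}$ and $\lambda=\{(c_1,n_1),\dots,(c_s,n_s)\}$ (in fixed orderings), an arrangement of $\tau$ into $\lambda$ is an $r\times s$ non-negative integer matrix $A$ with $A\vec n=\vec m$ and $A^T\vec b=\vec c$. *)

theory Defs
  imports Main "HOL-Library.Poly_Mapping" "HOL-Library.Multiset" "HOL-Library.Product_Lexorder"
begin

text \<open>Monomials in the variables x_ij: finitely supported exponent functions on index pairs.
  Only monomials whose variables have both indices \<ge> 1 are genuine; all series below vanish
  on the others.  A formal sum of monomials (with integer coefficients) is its coefficient function.\<close>

type_synonym mono = "(nat \<times> nat) \<Rightarrow>\<^sub>0 nat"
type_synonym ps = "mono \<Rightarrow> int"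

definition valid_mono :: "mono \<Rightarrow> bool" where
  "valid_mono m \<longleftrightarrow> (\<forall>(i, j) \<in> Poly_Mapping.keys m. 1 \<le> i \<and> 1 \<le> j)"

definition mdeg :: "mono \<Rightarrow> nat" where
  "mdeg m = (\<Sum>(i, j) \<in> Poly_Mapping.keys m. i * Poly_Mapping.lookup m (i, j))"

definition mtype :: "mono \<Rightarrow> (nat \<times> nat) multiset" where
  "mtype m = image_mset (\<lambda>(i, j). (i, Poly_Mapping.lookup m (i, j))) (mset_set (Poly_Mapping.keys m))"

definition is_type :: "(nat \<times> nat) multiset \<Rightarrow> bool" where
  "is_type t \<longleftrightarrow> (\<forall>(b, m) \<in># t. 1 \<le> b \<and> 1 \<le> m)"

definition tdeg :: "(nat \<times> nat) multiset \<Rightarrow> nat" where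
  "tdeg t = (\<Sum>(b, m) \<in># t. b * m)"

definition types_of_deg :: "nat \<Rightarrow> (nat \<times> nat) multiset set" where
  "types_of_deg d = {t. is_type t \<and> tdeg t = d}"

definition ttrans :: "(nat \<times> nat) multiset \<Rightarrow> (nat \<times> nat) multiset" where
  "ttrans t = image_mset (\<lambda>(b, m). (m, b)) t"

definition pone :: ps where
  "pone m = (if m = 0 then 1 else 0)"

definition pmul :: "ps \<Rightarrow> ps \<Rightarrow> ps" where
  "pmul f g m = (\<Sum>(a, b) \<in> {(a, b). a + b = m}. f a * g b)"

definition pprod_list :: "ps list \<Rightarrow> ps" where
  "pprod_list fs = foldr pmul fs pone"

text \<open>substitution f(x_** ^ k), i.e. x_ij \<mapsto> x_ij^k (for k \<ge> 1)\<close>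
definition psubst :: "nat \<Rightarrow> ps \<Rightarrow> ps" where
  "psubst k f m = (if (\<forall>v. k dvd Poly_Mapping.lookup m v) then f (Poly_Mapping.map (\<lambda>e. e div k) m) else 0)"

definition Mt :: "(nat \<times> nat) multiset \<Rightarrow> ps" where
  "Mt t m = (if valid_mono m \<and> mtype m = t then 1 else 0)"

definition Hd :: "nat \<Rightarrow> ps" where
  "Hd d m = (if valid_mono m \<and> mdeg m = d then 1 else 0)"

definition Ed :: "nat \<Rightarrow> ps" where
  "Ed d m = (if valid_mono m \<and> mdeg m = d \<and> (\<forall>v \<in> Poly_Mapping.keys m. Poly_Mapping.lookup m v = 1) then 1 else 0)"

definition Hlam :: "(nat \<times> nat) multiset \<Rightarrow> ps" where
  "Hlam l = pprod_list (map (\<lambda>(d, k). psubst k (Hd d)) (sorted_list_of_multiset l))"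

definition Elam :: "(nat \<times> nat) multiset \<Rightarrow> ps" where
  "Elam l = pprod_list (map (\<lambda>(d, k). psubst k (Ed d)) (sorted_list_of_multiset l))"

definition arrangements :: "(nat \<times> nat) list \<Rightarrow> (nat \<times> nat) list \<Rightarrow> (nat \<Rightarrow> nat \<Rightarrow> nat) set" where
  "arrangements ts ls = {A.
     (\<forall>i j. (length ts \<le> i \<or> length ls \<le> j) \<longrightarrow> A i j = 0) \<and>
     (\<forall>i < length ts. (\<Sum>j < length ls. A i j * snd (ls ! j)) = snd (ts ! i)) \<and>
     (\<forall>j < length ls. (\<Sum>i < length ts. A i j * fst (ts ! i)) = fst (ls ! j))}"

definition arrangements01 :: "(nat \<times> nat) list \<Rightarrow> (nat \<times> nat) list \<Rightarrow> (nat \<Rightarrow> nat \<Rightarrow> nat) set" where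
  "arrangements01 ts ls = {A \<in> arrangements ts ls. \<forall>i j. A i j \<le> 1}"

definition acount :: "(nat \<times> nat) multiset \<Rightarrow> (nat \<times> nat) multiset \<Rightarrow> nat" where
  "acount t l = card (arrangements (sorted_list_of_multiset t) (sorted_list_of_multiset l))"

definition ecount :: "(nat \<times> nat) multiset \<Rightarrow> (nat \<times> nat) multiset \<Rightarrow> nat" where
  "ecount t l = card (arrangements01 (sorted_list_of_multiset t) (sorted_list_of_multiset l))"

definition mtransp :: "(nat \<Rightarrow> nat \<Rightarrow> nat) \<Rightarrow> (nat \<Rightarrow> nat \<Rightarrow> nat)" where
  "mtransp A = (\<lambda>i j. A j i)"

end

theory Submission
  imports Defs "HOL-Combinatorics.List_Permutation"
begin

text \<open>
  Both H_\<lambda> and E^+_\<lambda> are products, over the parts (c, n) of \<lambda>, of series H^Q_c(x^n), where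
  H^Q_c sums the monomials of degree c all of whose exponents satisfy Q.  A monomial m occurs in
  the product once for each way of writing it as a product of one monomial y_j^(n_j) per factor.
  Recording the exponent of each variable v of m in y_j gives a matrix with rows indexed by the
  variables of m: its row sums weighted by the n_j are the exponents of m, and its column sums
  weighted by the degrees of the variables are the c_j.  After numbering the variables these are
  exactly the arrangements of the type of m into \<lambda> with nonzero entries satisfying Q.  Their
  number does not depend on how the two types are ordered, and transposition exchanges the
  roles of \<tau> and \<lambda>^t.
\<close>

text \<open>Rows are indexed by an arbitrary set, so that the variables of a monomial can label them.\<close>

definition arrangements_on :: "(nat \<Rightarrow> bool) \<Rightarrow> 'k set \<Rightarrow> ('k \<Rightarrow> nat) \<Rightarrow> ('k \<Rightarrow> nat)
    \<Rightarrow> (nat \<times> nat) list \<Rightarrow> ('k \<Rightarrow> nat \<Rightarrow> nat) set" where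
  "arrangements_on Q K b m ls = {A.
     (\<forall>v j. (v \<notin> K \<or> length ls \<le> j) \<longrightarrow> A v j = 0) \<and>
     (\<forall>v \<in> K. (\<Sum>j < length ls. A v j * snd (ls ! j)) = m v) \<and>
     (\<forall>j < length ls. (\<Sum>v \<in> K. A v j * b v) = fst (ls ! j)) \<and>
     (\<forall>v j. A v j = 0 \<or> Q (A v j))}"

abbreviation list_arrangements :: "(nat \<Rightarrow> bool) \<Rightarrow> (nat \<times> nat) list \<Rightarrow> (nat \<times> nat) list
    \<Rightarrow> (nat \<Rightarrow> nat \<Rightarrow> nat) set" where
  "list_arrangements Q ts ls \<equiv>
     arrangements_on Q {..<length ts} (\<lambda>i. fst (ts ! i)) (\<lambda>i. snd (ts ! i)) ls"

lemma arrangements_eq_list_arrangements: "arrangements ts ls = list_arrangements (\<lambda>_. True) ts ls"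
  by (auto simp: arrangements_def arrangements_on_def)

lemma arrangements01_eq_list_arrangements:
  "arrangements01 ts ls = list_arrangements (\<lambda>e. e = 1) ts ls"
proof -
  have "(e::nat) \<le> 1 \<longleftrightarrow> e = 0 \<or> e = 1" for e by arith
  then show ?thesis by (auto simp: arrangements01_def arrangements_def arrangements_on_def)
qed

abbreviation transpose_list :: "(nat \<times> nat) list \<Rightarrow> (nat \<times> nat) list" where
  "transpose_list xs \<equiv> map (\<lambda>(b, m). (m, b)) xs"

lemma mtransp_mtransp [simp]: "mtransp (mtransp A) = A"
  by (simp add: mtransp_def)

lemma mtransp_in_list_arrangements:
  "A \<in> list_arrangements Q ts ls \<Longrightarrow> mtransp A \<in> list_arrangements Q (transpose_list ls) (transpose_list ts)"
  by (auto simp: arrangements_on_def mtransp_def case_prod_beta)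

lemma transpose_list_transpose_list [simp]: "transpose_list (transpose_list xs) = xs"
  by (induct xs) auto

lemma bij_betw_mtransp_list_arrangements:
  "bij_betw mtransp (list_arrangements Q ts ls)
     (list_arrangements Q (transpose_list ls) (transpose_list ts))"
proof (rule bij_betw_byWitness[where f' = mtransp])
  show "mtransp ` list_arrangements Q ts ls
      \<subseteq> list_arrangements Q (transpose_list ls) (transpose_list ts)"
    by (rule image_subsetI, rule mtransp_in_list_arrangements)
  show "mtransp ` list_arrangements Q (transpose_list ls) (transpose_list ts)
      \<subseteq> list_arrangements Q ts ls"
    using mtransp_in_list_arrangements[of _ Q "transpose_list ls" "transpose_list ts"]
    unfolding transpose_list_transpose_list by blast
qed simp_all

lemma reindex_in_arrangements_on:
  assumes "bij_betw h K K'" and "\<forall>v \<in> K. b' (h v) = b v \<and> m' (h v) = m v"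
    and "B \<in> arrangements_on Q K' b' m' ls"
  shows "(\<lambda>v j. if v \<in> K then B (h v) j else 0) \<in> arrangements_on Q K b m ls"
proof -
  have "(\<Sum>v \<in> K. B (h v) j * b' (h v)) = (\<Sum>w \<in> K'. B w j * b' w)" for j
    using sum.reindex_bij_betw[OF assms(1)] .
  then show ?thesis
    using assms bij_betw_apply[OF assms(1)] by (auto simp: arrangements_on_def)
qed

lemma card_arrangements_on_reindex:
  assumes h: "bij_betw h K K'" and "\<forall>v \<in> K. b' (h v) = b v \<and> m' (h v) = m v"
  shows "card (arrangements_on Q K b m ls) = card (arrangements_on Q K' b' m' ls)"
proof -
  let ?g = "inv_into K h"
  have g: "bij_betw ?g K' K" using h by (rule bij_betw_inv_into)
  have hg: "w \<in> K' \<Longrightarrow> h (?g w) = w" and gh: "v \<in> K \<Longrightarrow> ?g (h v) = v" for v w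
    using h by (simp_all add: bij_betw_inv_into_right bij_betw_inv_into_left)
  have "\<forall>w \<in> K'. b (?g w) = b' w \<and> m (?g w) = m' w"
    using assms(2) hg g by (metis bij_betw_apply)
  then show ?thesis
  proof (intro bij_betw_same_card bij_betw_byWitness[where f' = "\<lambda>A v j. if v \<in> K then A (h v) j else 0"])
    show "\<forall>A \<in> arrangements_on Q K b m ls.
        (\<lambda>v j. if v \<in> K then (if h v \<in> K' then A (?g (h v)) j else 0) else 0) = A"
      using gh bij_betw_apply[OF h] by (auto simp: arrangements_on_def fun_eq_iff)
    show "\<forall>B \<in> arrangements_on Q K' b' m' ls.
        (\<lambda>w j. if w \<in> K' then (if ?g w \<in> K then B (h (?g w)) j else 0) else 0) = B"
      using hg bij_betw_apply[OF g] by (auto simp: arrangements_on_def fun_eq_iff)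
  qed (auto intro: reindex_in_arrangements_on[OF h assms(2)] reindex_in_arrangements_on[OF g])
qed

lemma card_list_arrangements_mset_rows:
  assumes "mset ts = mset ts'"
  shows "card (list_arrangements Q ts ls) = card (list_arrangements Q ts' ls)"
proof -
  obtain f where "bij_betw f {..<length ts} {..<length ts'}" and "\<forall>i < length ts. ts ! i = ts' ! f i"
    using permutation_Ex_bij[OF assms] by blast
  then show ?thesis by (intro card_arrangements_on_reindex) auto
qed

lemma card_list_arrangements_mset:
  assumes "mset ts = mset ts'" and "mset ls = mset ls'"
  shows "card (list_arrangements Q ts ls) = card (list_arrangements Q ts' ls')"
proof -
  have "card (list_arrangements Q ts ls) = card (list_arrangements Q ts' ls)"
    using assms(1) by (rule card_list_arrangements_mset_rows)
  also have "\<dots> = card (list_arrangements Q (transpose_list ls) (transpose_list ts'))"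
    by (rule bij_betw_same_card[OF bij_betw_mtransp_list_arrangements])
  also have "\<dots> = card (list_arrangements Q (transpose_list ls') (transpose_list ts'))"
    using assms(2) by (intro card_list_arrangements_mset_rows) simp
  also have "\<dots> = card (list_arrangements Q ts' ls')"
    by (rule bij_betw_same_card[OF bij_betw_mtransp_list_arrangements, symmetric])
  finally show ?thesis .
qed

definition fitting_columns :: "(nat \<Rightarrow> bool) \<Rightarrow> 'k set \<Rightarrow> ('k \<Rightarrow> nat) \<Rightarrow> ('k \<Rightarrow> nat) \<Rightarrow> nat \<Rightarrow> nat
    \<Rightarrow> ('k \<Rightarrow> nat) set" where
  "fitting_columns Q K b m c n = {a. (\<forall>v. v \<notin> K \<longrightarrow> a v = 0) \<and> (\<forall>v. n * a v \<le> m v) \<and>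
     (\<Sum>v \<in> K. a v * b v) = c \<and> (\<forall>v. a v = 0 \<or> Q (a v))}"

lemma all_nat_arg_Suc_iff: "(\<forall>v j. P v j) \<longleftrightarrow> (\<forall>v. P v 0) \<and> (\<forall>v j. P v (Suc j))"
  by (metis not0_implies_Suc)

lemma arrangements_on_Cons_iff:
  "A \<in> arrangements_on Q K b m ((c, n) # ls) \<longleftrightarrow>
     (\<lambda>v. A v 0) \<in> fitting_columns Q K b m c n \<and>
     (\<lambda>v j. A v (Suc j)) \<in> arrangements_on Q K b (\<lambda>v. m v - n * A v 0) ls"
proof -
  have rows: "(\<Sum>j < length ((c, n) # ls). A v j * snd (((c, n) # ls) ! j)) = m v \<longleftrightarrow>
      n * A v 0 \<le> m v \<and> (\<Sum>j < length ls. A v (Suc j) * snd (ls ! j)) = m v - n * A v 0" for v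
  proof -
    have "(\<Sum>j < length ((c, n) # ls). A v j * snd (((c, n) # ls) ! j))
        = n * A v 0 + (\<Sum>j < length ls. A v (Suc j) * snd (ls ! j))"
      by (simp only: length_Cons sum.lessThan_Suc_shift) simp
    then show ?thesis by auto
  qed
  show ?thesis
    unfolding arrangements_on_def fitting_columns_def mem_Collect_eq rows
    by (subst (1 2) all_nat_arg_Suc_iff) (auto simp: All_less_Suc2)
qed

lemma arrangements_on_Nil:
  "arrangements_on Q K b m [] = (if \<forall>v \<in> K. m v = 0 then {\<lambda>_ _. 0} else {})"
  by (auto simp: arrangements_on_def fun_eq_iff)

lemma bij_betw_arrangements_on_Cons:
  "bij_betw (\<lambda>A. (\<lambda>v. A v 0, \<lambda>v j. A v (Suc j))) (arrangements_on Q K b m ((c, n) # ls))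
     (SIGMA a : fitting_columns Q K b m c n. arrangements_on Q K b (\<lambda>v. m v - n * a v) ls)"
  by (rule bij_betw_byWitness[where f' = "\<lambda>(a, B) v j. case j of 0 \<Rightarrow> a v | Suc j \<Rightarrow> B v j"])
    (auto simp: arrangements_on_Cons_iff fun_eq_iff split: nat.split)

lemma finite_fitting_columns:
  assumes "finite K" and "\<forall>v \<in> K. 1 \<le> b v"
  shows "finite (fitting_columns Q K b m c n)"
proof (rule finite_subset)
  have "a v \<le> c" if "a \<in> fitting_columns Q K b m c n" "v \<in> K" for a v
  proof -
    have "a v \<le> a v * b v" using assms(2) that(2) by simp
    also have "\<dots> \<le> (\<Sum>w \<in> K. a w * b w)" by (intro member_le_sum) (use assms(1) that(2) in auto)
    finally show ?thesis using that(1) by (simp add: fitting_columns_def)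
  qed
  then show "fitting_columns Q K b m c n \<subseteq> {a. \<forall>v. (v \<in> K \<longrightarrow> a v \<in> {..c}) \<and> (v \<notin> K \<longrightarrow> a v = 0)}"
    by (auto simp: fitting_columns_def)
qed (rule finite_set_of_finite_funs[OF assms(1) finite_atMost])

lemma finite_arrangements_on:
  assumes "finite K" and "\<forall>v \<in> K. 1 \<le> b v"
  shows "finite (arrangements_on Q K b m ls)"
proof (induction ls arbitrary: m)
  case Nil
  show ?case by (simp add: arrangements_on_Nil)
next
  case (Cons p ls)
  then show ?case
    using bij_betw_finite[OF bij_betw_arrangements_on_Cons[of Q K b m "fst p" "snd p" ls]]
      finite_fitting_columns[OF assms] by auto
qed

lemma card_arrangements_on_Cons:
  assumes "finite K" and "\<forall>v \<in> K. 1 \<le> b v"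
  shows "card (arrangements_on Q K b m ((c, n) # ls)) =
    (\<Sum>a \<in> fitting_columns Q K b m c n. card (arrangements_on Q K b (\<lambda>v. m v - n * a v) ls))"
  unfolding bij_betw_same_card[OF bij_betw_arrangements_on_Cons]
  by (rule card_SigmaI) (simp_all add: finite_fitting_columns[OF assms] finite_arrangements_on[OF assms])

definition gen_H :: "(nat \<Rightarrow> bool) \<Rightarrow> nat \<Rightarrow> ps" where
  "gen_H Q d m =
     (if valid_mono m \<and> mdeg m = d \<and> (\<forall>v \<in> Poly_Mapping.keys m. Q (Poly_Mapping.lookup m v))
      then 1 else 0)"

definition gen_Hlam :: "(nat \<Rightarrow> bool) \<Rightarrow> (nat \<times> nat) list \<Rightarrow> ps" where
  "gen_Hlam Q ls = pprod_list (map (\<lambda>(c, n). psubst n (gen_H Q c)) ls)"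

lemma Hlam_eq_gen_Hlam: "Hlam l = gen_Hlam (\<lambda>_. True) (sorted_list_of_multiset l)"
proof -
  have "Hd = gen_H (\<lambda>_. True)" by (simp add: fun_eq_iff Hd_def gen_H_def)
  then show ?thesis by (simp add: Hlam_def gen_Hlam_def)
qed

lemma Elam_eq_gen_Hlam: "Elam l = gen_Hlam (\<lambda>e. e = 1) (sorted_list_of_multiset l)"
proof -
  have "Ed = gen_H (\<lambda>e. e = 1)" by (simp add: fun_eq_iff Ed_def gen_H_def)
  then show ?thesis by (simp add: Elam_def gen_Hlam_def)
qed

lemma gen_Hlam_Nil [simp]: "gen_Hlam Q [] = pone"
  by (simp add: gen_Hlam_def pprod_list_def)

lemma gen_Hlam_Cons [simp]:
  "gen_Hlam Q ((c, n) # ls) = pmul (psubst n (gen_H Q c)) (gen_Hlam Q ls)"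
  by (simp add: gen_Hlam_def pprod_list_def)

lemma lookup_map_div:
  "Poly_Mapping.lookup (Poly_Mapping.map (\<lambda>e. e div n) (x :: 'a \<Rightarrow>\<^sub>0 nat)) v = Poly_Mapping.lookup x v div n"
  by (simp add: Poly_Mapping.map.rep_eq when_def)

lemma valid_mono_add: "valid_mono x \<Longrightarrow> valid_mono y \<Longrightarrow> valid_mono (x + y)"
  using keys_add[of x y] by (auto simp: valid_mono_def)

lemma valid_mono_if_valid_map_div:
  assumes "\<forall>v. n dvd Poly_Mapping.lookup x v" and "valid_mono (Poly_Mapping.map (\<lambda>e. e div n) x)"
  shows "valid_mono x"
proof -
  have "Poly_Mapping.keys x \<subseteq> Poly_Mapping.keys (Poly_Mapping.map (\<lambda>e. e div n) x)"
    using assms(1) by (auto simp: in_keys_iff lookup_map_div dvd_div_eq_0_iff)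
  then show ?thesis using assms(2) by (auto simp: valid_mono_def)
qed

lemma pmul_eq_0_if_not_valid:
  assumes "\<And>x. \<not> valid_mono x \<Longrightarrow> f x = 0" and "\<And>y. \<not> valid_mono y \<Longrightarrow> g y = 0"
    and "\<not> valid_mono m"
  shows "pmul f g m = 0"
proof -
  have "f x * g y = 0" if "x + y = m" for x y
    using assms valid_mono_add[of x y] that by auto
  then show ?thesis unfolding pmul_def by (intro sum.neutral) auto
qed

lemma psubst_eq_0_if_not_valid:
  assumes "\<And>x. \<not> valid_mono x \<Longrightarrow> f x = 0" and "\<not> valid_mono m"
  shows "psubst n f m = 0"
  using assms valid_mono_if_valid_map_div by (auto simp: psubst_def)

lemma gen_H_eq_0_if_not_valid: "\<not> valid_mono m \<Longrightarrow> gen_H Q d m = 0"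
  by (simp add: gen_H_def)

lemma gen_Hlam_eq_0_if_not_valid: "\<not> valid_mono m \<Longrightarrow> gen_Hlam Q ls m = 0"
proof (induction ls arbitrary: m)
  case Nil
  then have "m \<noteq> 0" by (auto simp: valid_mono_def)
  then show ?case by (simp add: pone_def)
next
  case (Cons p ls)
  then show ?case
    by (cases p) (auto intro!: pmul_eq_0_if_not_valid psubst_eq_0_if_not_valid gen_H_eq_0_if_not_valid)
qed

lemma finite_summands: "finite {(x, y). x + y = (m :: 'a \<Rightarrow>\<^sub>0 nat)}"
proof -
  let ?X = "{x :: 'a \<Rightarrow>\<^sub>0 nat. \<forall>v. Poly_Mapping.lookup x v \<le> Poly_Mapping.lookup m v}"
  let ?B = "\<Union>v \<in> Poly_Mapping.keys m. {..Poly_Mapping.lookup m v}"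
  have "Poly_Mapping.lookup ` ?X \<subseteq>
      {f. \<forall>v. (v \<in> Poly_Mapping.keys m \<longrightarrow> f v \<in> ?B) \<and> (v \<notin> Poly_Mapping.keys m \<longrightarrow> f v = 0)}"
  proof (intro image_subsetI CollectI allI conjI impI)
    fix x v assume "x \<in> ?X"
    then have le: "Poly_Mapping.lookup x v \<le> Poly_Mapping.lookup m v" by blast
    then show "v \<in> Poly_Mapping.keys m \<Longrightarrow> Poly_Mapping.lookup x v \<in> ?B" by blast
    show "v \<notin> Poly_Mapping.keys m \<Longrightarrow> Poly_Mapping.lookup x v = 0"
      using le by (simp add: in_keys_iff)
  qed
  then have "finite (Poly_Mapping.lookup ` ?X)"
    by (rule finite_subset) (intro finite_set_of_finite_funs; simp)
  then have "finite ?X" by (rule finite_imageD) (simp add: inj_on_def)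
  moreover have "{(x, y). x + y = m} \<subseteq> (\<lambda>x. (x, m - x)) ` ?X"
  proof
    fix p assume "p \<in> {(x, y). x + y = m}"
    then obtain x y where p: "p = (x, y)" and m: "x + y = m" by blast
    then have "x \<in> ?X" by (auto simp: lookup_add)
    moreover have "y = m - x" using m by auto
    ultimately show "p \<in> (\<lambda>x. (x, m - x)) ` ?X" using p by blast
  qed
  ultimately show ?thesis using finite_subset by blast
qed

lemma pmul_indicator:
  assumes "\<forall>x. f x = 0 \<or> f x = 1"
  shows "pmul f g m =
    (\<Sum>x \<in> {x. f x = 1 \<and> (\<forall>v. Poly_Mapping.lookup x v \<le> Poly_Mapping.lookup m v)}. g (m - x))"
proof -
  let ?P = "{(x, y). x + y = m}"
  let ?S = "{x. f x = 1 \<and> (\<forall>v. Poly_Mapping.lookup x v \<le> Poly_Mapping.lookup m v)}"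
  have add_diff: "x + (m - x) = m" if "x \<in> ?S" for x
  proof (rule poly_mapping_eqI)
    fix v
    have "Poly_Mapping.lookup x v \<le> Poly_Mapping.lookup m v" using that by blast
    then show "Poly_Mapping.lookup (x + (m - x)) v = Poly_Mapping.lookup m v"
      by (simp add: lookup_add lookup_minus)
  qed
  have "(\<lambda>x. (x, m - x)) ` ?S = {p \<in> ?P. f (fst p) = 1}"
  proof (intro equalityI subsetI)
    fix p assume "p \<in> (\<lambda>x. (x, m - x)) ` ?S"
    then show "p \<in> {p \<in> ?P. f (fst p) = 1}" using add_diff by auto
  next
    fix p assume "p \<in> {p \<in> ?P. f (fst p) = 1}"
    then obtain x y where p: "p = (x, y)" and m: "x + y = m" and "f x = 1" by auto
    then have "x \<in> ?S" by (auto simp: lookup_add)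
    moreover have "y = m - x" using m by auto
    ultimately show "p \<in> (\<lambda>x. (x, m - x)) ` ?S" using p by blast
  qed
  then have bij: "bij_betw (\<lambda>x. (x, m - x)) ?S {p \<in> ?P. f (fst p) = 1}"
    by (intro bij_betw_imageI) (simp_all add: inj_on_def)
  have "pmul f g m = (\<Sum>p \<in> {p \<in> ?P. f (fst p) = 1}. g (snd p))"
    unfolding pmul_def using assms
    by (intro sum.mono_neutral_cong_right finite_summands) auto
  also have "\<dots> = (\<Sum>x \<in> ?S. g (m - x))"
    using bij by (simp add: sum.reindex_bij_betw[symmetric])
  finally show ?thesis .
qed

lemma mdeg_eq_sum:
  assumes "finite K" and "Poly_Mapping.keys x \<subseteq> K"
  shows "mdeg x = (\<Sum>v \<in> K. Poly_Mapping.lookup x v * fst v)"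
proof -
  have "mdeg x = (\<Sum>v \<in> Poly_Mapping.keys x. Poly_Mapping.lookup x v * fst v)"
    unfolding mdeg_def by (intro sum.cong refl) (auto simp: case_prod_beta)
  also have "\<dots> = (\<Sum>v \<in> K. Poly_Mapping.lookup x v * fst v)"
    using assms by (intro sum.mono_neutral_left) (auto simp: in_keys_iff)
  finally show ?thesis .
qed

lemma valid_mono_if_keys_subset:
  "Poly_Mapping.keys x \<subseteq> K \<Longrightarrow> \<forall>v \<in> K. 1 \<le> fst v \<and> 1 \<le> snd v \<Longrightarrow> valid_mono x"
  unfolding valid_mono_def by (auto simp: case_prod_beta)

lemma psubst_gen_H_eq_1_iff:
  assumes "finite K" and valid: "\<forall>v \<in> K. 1 \<le> fst v \<and> 1 \<le> snd v"
    and "Poly_Mapping.keys m \<subseteq> K" and le: "\<forall>v. Poly_Mapping.lookup x v \<le> Poly_Mapping.lookup m v"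
  shows "psubst n (gen_H Q c) x = 1 \<longleftrightarrow> (\<forall>v. n dvd Poly_Mapping.lookup x v) \<and>
    (\<lambda>v. Poly_Mapping.lookup x v div n) \<in> fitting_columns Q K fst (Poly_Mapping.lookup m) c n"
proof (cases "\<forall>v. n dvd Poly_Mapping.lookup x v")
  case True
  let ?y = "Poly_Mapping.map (\<lambda>e. e div n) x"
  have "Poly_Mapping.keys x \<subseteq> Poly_Mapping.keys m"
  proof
    fix v assume "v \<in> Poly_Mapping.keys x"
    then show "v \<in> Poly_Mapping.keys m" using le[rule_format, of v]
      by (auto simp: in_keys_iff)
  qed
  then have "Poly_Mapping.keys x \<subseteq> K" using assms(3) by blast
  moreover have "Poly_Mapping.keys ?y \<subseteq> Poly_Mapping.keys x"
    by (auto simp: in_keys_iff lookup_map_div) (metis div_0 not_gr0)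
  ultimately have keys: "Poly_Mapping.keys ?y \<subseteq> K" by blast
  have "valid_mono ?y"
    using keys valid by (rule valid_mono_if_keys_subset)
  moreover have "mdeg ?y = (\<Sum>v \<in> K. Poly_Mapping.lookup x v div n * fst v)"
    using mdeg_eq_sum[OF assms(1) keys] by (simp add: lookup_map_div)
  moreover have "\<forall>v. n * (Poly_Mapping.lookup x v div n) \<le> Poly_Mapping.lookup m v"
    using True le by simp
  moreover have "\<forall>v. v \<notin> K \<longrightarrow> Poly_Mapping.lookup x v div n = 0"
    using keys by (auto simp: in_keys_iff lookup_map_div)
  moreover have "(\<forall>v \<in> Poly_Mapping.keys ?y. Q (Poly_Mapping.lookup ?y v)) \<longleftrightarrow>
      (\<forall>v. Poly_Mapping.lookup x v div n = 0 \<or> Q (Poly_Mapping.lookup x v div n))"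
    by (auto simp: in_keys_iff lookup_map_div) (metis neq0_conv)
  ultimately show ?thesis
    using True by (simp add: psubst_def gen_H_def fitting_columns_def)
qed (auto simp: psubst_def)

lemma lookup_scaled_column:
  assumes "finite K" and "a \<in> fitting_columns Q K b m c n"
  shows "Poly_Mapping.lookup (Abs_poly_mapping (\<lambda>v. n * a v)) = (\<lambda>v. n * a v)"
proof -
  have "{v. n * a v \<noteq> 0} \<subseteq> K" using assms(2) by (auto simp: fitting_columns_def)
  then show ?thesis using assms(1) finite_subset by (intro lookup_Abs_poly_mapping) blast
qed

text \<open>The monomial contributed by the factor psubst n (gen_H Q c) is n times a column.\<close>

lemma bij_betw_scaled_fitting_columns:
  assumes "finite K" and "\<forall>v \<in> K. 1 \<le> fst v \<and> 1 \<le> snd v"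
    and "Poly_Mapping.keys m \<subseteq> K" and "1 \<le> n"
  shows "bij_betw (\<lambda>a. Abs_poly_mapping (\<lambda>v. n * a v)) (fitting_columns Q K fst (Poly_Mapping.lookup m) c n)
    {x. psubst n (gen_H Q c) x = 1 \<and> (\<forall>v. Poly_Mapping.lookup x v \<le> Poly_Mapping.lookup m v)}"
proof (rule bij_betw_byWitness[where f' = "\<lambda>x v. Poly_Mapping.lookup x v div n"])
  note iff = psubst_gen_H_eq_1_iff[OF assms(1-3)]
  show "\<forall>a \<in> fitting_columns Q K fst (Poly_Mapping.lookup m) c n.
      (\<lambda>v. Poly_Mapping.lookup (Abs_poly_mapping (\<lambda>v. n * a v)) v div n) = a"
    using assms(1,4) lookup_scaled_column by fastforce
  show "\<forall>x \<in> {x. psubst n (gen_H Q c) x = 1 \<and> (\<forall>v. Poly_Mapping.lookup x v \<le> Poly_Mapping.lookup m v)}.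
      Abs_poly_mapping (\<lambda>v. n * (Poly_Mapping.lookup x v div n)) = x"
  proof
    fix x assume "x \<in> {x. psubst n (gen_H Q c) x = 1 \<and> (\<forall>v. Poly_Mapping.lookup x v \<le> Poly_Mapping.lookup m v)}"
    then have "\<forall>v. n dvd Poly_Mapping.lookup x v" using iff by blast
    then show "Abs_poly_mapping (\<lambda>v. n * (Poly_Mapping.lookup x v div n)) = x"
      by (simp del: split_paired_All)
  qed
  show "(\<lambda>x v. Poly_Mapping.lookup x v div n) `
      {x. psubst n (gen_H Q c) x = 1 \<and> (\<forall>v. Poly_Mapping.lookup x v \<le> Poly_Mapping.lookup m v)}
      \<subseteq> fitting_columns Q K fst (Poly_Mapping.lookup m) c n"
    using iff by blast
  show "(\<lambda>a. Abs_poly_mapping (\<lambda>v. n * a v)) ` fitting_columns Q K fst (Poly_Mapping.lookup m) c n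
      \<subseteq> {x. psubst n (gen_H Q c) x = 1 \<and> (\<forall>v. Poly_Mapping.lookup x v \<le> Poly_Mapping.lookup m v)}"
  proof (intro image_subsetI CollectI)
    fix a assume a: "a \<in> fitting_columns Q K fst (Poly_Mapping.lookup m) c n"
    let ?x = "Abs_poly_mapping (\<lambda>v. n * a v)"
    have lx: "Poly_Mapping.lookup ?x = (\<lambda>v. n * a v)" using assms(1) a by (rule lookup_scaled_column)
    have le: "\<forall>v. Poly_Mapping.lookup ?x v \<le> Poly_Mapping.lookup m v"
      using a by (simp add: lx fitting_columns_def)
    have "(\<lambda>v. Poly_Mapping.lookup ?x v div n) = a" using assms(4) by (simp add: lx)
    then have "psubst n (gen_H Q c) ?x = 1" using iff[OF le] a by (simp add: lx)
    with le show "psubst n (gen_H Q c) ?x = 1 \<and> (\<forall>v. Poly_Mapping.lookup ?x v \<le> Poly_Mapping.lookup m v)"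
      by blast
  qed
qed

lemma pmul_psubst_gen_H_eq_sum_fitting_columns:
  assumes "finite K" and "\<forall>v \<in> K. 1 \<le> fst v \<and> 1 \<le> snd v"
    and "Poly_Mapping.keys m \<subseteq> K" and "1 \<le> n"
    and g: "\<And>y. Poly_Mapping.keys y \<subseteq> K \<Longrightarrow> g y = G (Poly_Mapping.lookup y)"
  shows "pmul (psubst n (gen_H Q c)) g m =
    (\<Sum>a \<in> fitting_columns Q K fst (Poly_Mapping.lookup m) c n.
       G (\<lambda>v. Poly_Mapping.lookup m v - n * a v))"
proof -
  have "pmul (psubst n (gen_H Q c)) g m = (\<Sum>x \<in> {x. psubst n (gen_H Q c) x = 1 \<and>
      (\<forall>v. Poly_Mapping.lookup x v \<le> Poly_Mapping.lookup m v)}. g (m - x))"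
    by (rule pmul_indicator) (simp add: psubst_def gen_H_def)
  also have "\<dots> = (\<Sum>a \<in> fitting_columns Q K fst (Poly_Mapping.lookup m) c n.
      g (m - Abs_poly_mapping (\<lambda>v. n * a v)))"
    by (rule sum.reindex_bij_betw[OF bij_betw_scaled_fitting_columns[OF assms(1-4)], symmetric])
  also have "\<dots> = (\<Sum>a \<in> fitting_columns Q K fst (Poly_Mapping.lookup m) c n.
      G (\<lambda>v. Poly_Mapping.lookup m v - n * a v))"
  proof (rule sum.cong[OF refl])
    fix a assume "a \<in> fitting_columns Q K fst (Poly_Mapping.lookup m) c n"
    from lookup_scaled_column[OF assms(1) this]
    have lookup: "Poly_Mapping.lookup (m - Abs_poly_mapping (\<lambda>v. n * a v)) =
        (\<lambda>v. Poly_Mapping.lookup m v - n * a v)"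
      by (intro ext) (simp add: lookup_minus)
    then have "Poly_Mapping.keys (m - Abs_poly_mapping (\<lambda>v. n * a v)) \<subseteq> K"
      using assms(3) by (auto simp: in_keys_iff)
    then show "g (m - Abs_poly_mapping (\<lambda>v. n * a v)) = G (\<lambda>v. Poly_Mapping.lookup m v - n * a v)"
      by (simp add: g lookup)
  qed
  finally show ?thesis .
qed

lemma gen_Hlam_eq_card_arrangements_on:
  assumes "finite K" and valid: "\<forall>v \<in> K. 1 \<le> fst v \<and> 1 \<le> snd v"
    and "\<forall>p \<in> set ls. 1 \<le> snd p" and "Poly_Mapping.keys m \<subseteq> K"
  shows "gen_Hlam Q ls m = int (card (arrangements_on Q K fst (Poly_Mapping.lookup m) ls))"
  using assms(3,4)
proof (induction ls arbitrary: m)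
  case Nil
  have "m = 0" if "\<forall>v \<in> K. Poly_Mapping.lookup m v = 0"
    using that Nil.prems(2) by (metis in_keys_iff lookup_zero poly_mapping_eqI subsetD)
  then show ?case by (auto simp: pone_def arrangements_on_Nil)
next
  case (Cons p ls)
  obtain c n where p: "p = (c, n)" by fastforce
  have n: "1 \<le> n" using Cons.prems(1) p by simp
  have IH: "gen_Hlam Q ls y = int (card (arrangements_on Q K fst (Poly_Mapping.lookup y) ls))"
    if "Poly_Mapping.keys y \<subseteq> K" for y
    using Cons.IH Cons.prems(1) that by simp
  have K: "\<forall>v \<in> K. 1 \<le> fst v" using valid by blast
  have "gen_Hlam Q (p # ls) m = (\<Sum>a \<in> fitting_columns Q K fst (Poly_Mapping.lookup m) c n.
      int (card (arrangements_on Q K fst (\<lambda>v. Poly_Mapping.lookup m v - n * a v) ls)))"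
    unfolding p gen_Hlam_Cons
    by (rule pmul_psubst_gen_H_eq_sum_fitting_columns
        [where G = "\<lambda>e. int (card (arrangements_on Q K fst e ls))", OF assms(1) valid Cons.prems(2) n IH])
  also have "\<dots> = int (card (arrangements_on Q K fst (Poly_Mapping.lookup m) (p # ls)))"
    by (simp add: p card_arrangements_on_Cons[OF assms(1) K])
  finally show ?case .
qed

lemma mset_keys_list_eq_mtype:
  "mset (map (\<lambda>v. (fst v, Poly_Mapping.lookup m v)) (sorted_list_of_set (Poly_Mapping.keys m))) = mtype m"
proof -
  have "mset (sorted_list_of_set (Poly_Mapping.keys m)) = mset_set (Poly_Mapping.keys m)"
    by (metis mset_sorted_list_of_multiset sorted_list_of_mset_set)
  moreover have "(\<lambda>(i, j). (i, Poly_Mapping.lookup m (i, j))) = (\<lambda>v. (fst v, Poly_Mapping.lookup m v))"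
    by (simp add: fun_eq_iff)
  ultimately show ?thesis by (simp add: mtype_def)
qed

lemma card_arrangements_on_keys:
  "card (arrangements_on Q (Poly_Mapping.keys m) fst (Poly_Mapping.lookup m) ls) =
    card (list_arrangements Q (sorted_list_of_multiset (mtype m)) ls)"
proof -
  define ks where "ks = sorted_list_of_set (Poly_Mapping.keys m)"
  define ts where "ts = map (\<lambda>v. (fst v, Poly_Mapping.lookup m v)) ks"
  have "bij_betw (nth ks) {..<length ts} (Poly_Mapping.keys m)"
    by (intro bij_betw_nth) (simp_all add: ks_def ts_def)
  then have "card (list_arrangements Q ts ls) =
      card (arrangements_on Q (Poly_Mapping.keys m) fst (Poly_Mapping.lookup m) ls)"
    by (rule card_arrangements_on_reindex) (simp add: ts_def)
  moreover have "card (list_arrangements Q ts ls) =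
      card (list_arrangements Q (sorted_list_of_multiset (mtype m)) ls)"
    by (rule card_list_arrangements_mset_rows) (simp only: ts_def ks_def mset_keys_list_eq_mtype mset_sorted_list_of_multiset)
  ultimately show ?thesis by simp
qed

lemma gen_Hlam_coeff:
  assumes "is_type l"
  shows "gen_Hlam Q (sorted_list_of_multiset l) m =
    (if valid_mono m
     then int (card (list_arrangements Q (sorted_list_of_multiset (mtype m)) (sorted_list_of_multiset l)))
     else 0)"
proof (cases "valid_mono m")
  case True
  then have "\<forall>v \<in> Poly_Mapping.keys m. 1 \<le> fst v \<and> 1 \<le> snd v"
    by (auto simp: valid_mono_def)
  moreover have "\<forall>p \<in> set (sorted_list_of_multiset l). 1 \<le> snd p"
    using assms by (auto simp: is_type_def)
  ultimately have "gen_Hlam Q (sorted_list_of_multiset l) m =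
      int (card (arrangements_on Q (Poly_Mapping.keys m) fst (Poly_Mapping.lookup m) (sorted_list_of_multiset l)))"
    by (intro gen_Hlam_eq_card_arrangements_on) simp_all
  then show ?thesis using True by (simp add: card_arrangements_on_keys)
qed (simp add: gen_Hlam_eq_0_if_not_valid)

lemma sum_weights_arrangements_on:
  assumes "A \<in> arrangements_on Q K b m ls" and "finite K"
  shows "(\<Sum>v \<in> K. b v * m v) = (\<Sum>j < length ls. fst (ls ! j) * snd (ls ! j))"
proof -
  have rows: "\<forall>v \<in> K. (\<Sum>j < length ls. A v j * snd (ls ! j)) = m v"
    and cols: "\<forall>j < length ls. (\<Sum>v \<in> K. A v j * b v) = fst (ls ! j)"
    using assms(1) by (simp_all add: arrangements_on_def)
  have "(\<Sum>v \<in> K. b v * m v) = (\<Sum>v \<in> K. \<Sum>j < length ls. b v * (A v j * snd (ls ! j)))"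
    using rows by (intro sum.cong refl) (simp add: sum_distrib_left[symmetric])
  also have "\<dots> = (\<Sum>j < length ls. (\<Sum>v \<in> K. A v j * b v) * snd (ls ! j))"
    by (subst sum.swap) (simp add: sum_distrib_left sum_distrib_right mult_ac)
  also have "\<dots> = (\<Sum>j < length ls. fst (ls ! j) * snd (ls ! j))"
    using cols by simp
  finally show ?thesis .
qed

lemma tdeg_mset: "tdeg (mset ts) = (\<Sum>i < length ts. fst (ts ! i) * snd (ts ! i))"
proof -
  have "tdeg (mset ts) = sum_list (map (\<lambda>(b, m). b * m) ts)"
    by (simp add: tdeg_def mset_map[symmetric] sum_mset_sum_list del: mset_map)
  then show ?thesis by (simp add: sum_list_sum_nth atLeast0LessThan case_prod_beta)
qed

lemma tdeg_eq_if_list_arrangements: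
  "A \<in> list_arrangements Q ts ls \<Longrightarrow> tdeg (mset ts) = tdeg (mset ls)"
  by (drule sum_weights_arrangements_on) (simp_all add: tdeg_mset)

lemma is_type_mtype: "valid_mono m \<Longrightarrow> is_type (mtype m)"
  by (auto simp: is_type_def mtype_def valid_mono_def in_keys_iff)

lemma finite_types_of_deg: "finite (types_of_deg d)"
proof (rule finite_subset)
  show "types_of_deg d \<subseteq> (\<Union>k \<le> d. multisets_of_size ({1..d} \<times> {1..d}) k)"
  proof
    fix t assume "t \<in> types_of_deg d"
    then have t: "\<forall>(b, m) \<in># t. 1 \<le> b \<and> 1 \<le> m" and d: "(\<Sum>(b, m) \<in># t. b * m) = d"
      by (simp_all add: types_of_deg_def is_type_def tdeg_def)
    have "size t \<le> d"
      unfolding size_eq_sum_mset d[symmetric] using t by (intro sum_mset_mono) auto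
    moreover have "p \<in> {1..d} \<times> {1..d}" if p: "p \<in># t" for p
    proof -
      obtain b m where bm: "p = (b, m)" by fastforce
      obtain t' where "t = add_mset p t'" using multi_member_split[OF p] by blast
      then have "b * m \<le> d" using d bm by auto
      moreover have "1 \<le> b" "1 \<le> m" using t p bm by auto
      ultimately show ?thesis using bm by (auto intro: le_trans[of _ "b * m"])
    qed
    ultimately show "t \<in> (\<Union>k \<le> d. multisets_of_size ({1..d} \<times> {1..d}) k)"
      by (auto simp: multisets_of_size_def)
  qed
qed auto

lemma gen_Hlam_expansion:
  assumes "is_type l" and "tdeg l = d"
  shows "gen_Hlam Q (sorted_list_of_multiset l) = (\<lambda>m. \<Sum>t \<in> types_of_deg d.
    int (card (list_arrangements Q (sorted_list_of_multiset t) (sorted_list_of_multiset l))) * Mt t m)"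
proof
  fix m
  let ?c = "\<lambda>t. int (card (list_arrangements Q (sorted_list_of_multiset t) (sorted_list_of_multiset l)))"
  show "gen_Hlam Q (sorted_list_of_multiset l) m = (\<Sum>t \<in> types_of_deg d. ?c t * Mt t m)"
  proof (cases "valid_mono m")
    case True
    have zero: "mtype m \<notin> types_of_deg d \<Longrightarrow> ?c (mtype m) = 0"
      using tdeg_eq_if_list_arrangements[of _ Q "sorted_list_of_multiset (mtype m)" "sorted_list_of_multiset l"]
        assms(2) is_type_mtype[OF True] by (fastforce simp: types_of_deg_def)
    have "(\<Sum>t \<in> types_of_deg d. ?c t * Mt t m) = (\<Sum>t \<in> types_of_deg d. if t = mtype m then ?c t else 0)"
      by (intro sum.cong refl) (auto simp: Mt_def True)
    also have "\<dots> = ?c (mtype m)"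
      using zero by (simp add: sum.delta finite_types_of_deg)
    finally show ?thesis using gen_Hlam_coeff[OF assms(1)] True by simp
  qed (simp add: gen_Hlam_coeff[OF assms(1)] Mt_def)
qed

lemma card_list_arrangements_ttrans:
  "card (list_arrangements Q (sorted_list_of_multiset t) (sorted_list_of_multiset l)) =
    card (list_arrangements Q (sorted_list_of_multiset (ttrans l)) (sorted_list_of_multiset (ttrans t)))"
  by (subst bij_betw_same_card[OF bij_betw_mtransp_list_arrangements])
    (rule card_list_arrangements_mset; simp add: ttrans_def)

theorem theorem4:
  fixes l :: "(nat \<times> nat) multiset" and d :: nat
  assumes "is_type l" and "tdeg l = d"
  shows "Hlam l = (\<lambda>m. \<Sum>t \<in> types_of_deg d. int (acount t l) * Mt t m)
    \<and> Elam l = (\<lambda>m. \<Sum>t \<in> types_of_deg d. int (ecount t l) * Mt t m)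
    \<and> (\<forall>t \<in> types_of_deg d. acount t l = acount (ttrans l) (ttrans t)
                              \<and> ecount t l = ecount (ttrans l) (ttrans t))
    \<and> (\<forall>t \<in> types_of_deg d. \<forall>ts ls. mset ts = t \<and> mset ls = l \<longrightarrow>
           bij_betw mtransp (arrangements ts ls)
             (arrangements (map (\<lambda>(b, m). (m, b)) ls) (map (\<lambda>(b, m). (m, b)) ts))
         \<and> bij_betw mtransp (arrangements01 ts ls)
             (arrangements01 (map (\<lambda>(b, m). (m, b)) ls) (map (\<lambda>(b, m). (m, b)) ts)))"
proof (intro conjI ballI allI impI)
  show "Hlam l = (\<lambda>m. \<Sum>t \<in> types_of_deg d. int (acount t l) * Mt t m)"
    unfolding Hlam_eq_gen_Hlam acount_def arrangements_eq_list_arrangements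
    by (rule gen_Hlam_expansion[OF assms])
  show "Elam l = (\<lambda>m. \<Sum>t \<in> types_of_deg d. int (ecount t l) * Mt t m)"
    unfolding Elam_eq_gen_Hlam ecount_def arrangements01_eq_list_arrangements
    by (rule gen_Hlam_expansion[OF assms])
  fix t
  show "acount t l = acount (ttrans l) (ttrans t)" "ecount t l = ecount (ttrans l) (ttrans t)"
    unfolding acount_def ecount_def arrangements_eq_list_arrangements arrangements01_eq_list_arrangements
    by (rule card_list_arrangements_ttrans)+
  fix ts ls :: "(nat \<times> nat) list"
  show "bij_betw mtransp (arrangements ts ls) (arrangements (transpose_list ls) (transpose_list ts))"
    "bij_betw mtransp (arrangements01 ts ls) (arrangements01 (transpose_list ls) (transpose_list ts))"
    unfolding arrangements_eq_list_arrangements arrangements01_eq_list_arrangements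
    by (rule bij_betw_mtransp_list_arrangements)+
qed

end
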